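(* Let $q$ be a set of operations on a set $\Omega$. For all $a,b\in\Omega$: $a\sim_q b$ if and only if for every formula $\phi(x,y)$ of $\mathscr L^-_{\infty\infty}(q)$ with exactly two free variables and every $c\in\Omega$, $\Omega,q\models\phi(a,c)\iff\Omega,q\models\phi(b,c)$.
   Context: A set of operations on $\Omega$ is a set of finitary relations on $\Omega$ and quantifiers on $\Omega$ (subsets of $\mathcal P(\Omega^{k_1})\times\cdots\times\mathcal P(\Omega^{k_l})$, $l,k_i$ finite). $\mathscr L^-_{\infty\infty}(q)$ is the equality-free infinitary logic (arbitrary conjunctions/disjunctions, quantification over arbitrary sequences of variables) with a predicate symbol for each relation in $q$ and a generalized (Lindström) quantifier symbol for each quantifier in $q$, interpreted in $\Omega$. $a\sim_q b$ iff for every formula $\phi(x,\bar y)$ of $\mathscr L^-_{\infty\infty}(q)$ and every tuple $\bar c$ from $\Omega$, $\Omega,q\models\phi(a,\bar c)\iff\Omega,q\models\phi(b,\bar c)$. *)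

theory Defs
  imports Main
begin

text \<open>The set \<Omega> is modelled as the universe of the type 'a.
  A set of operations q consists of
  - relations: pairs (k, R) with R a k-ary relation, given as a set of lists of length k;
  - quantifiers: pairs (ks, Q) with ks = [k_1,...,k_l] and
    Q a set of l-tuples (lists) of relations of arities k_1,...,k_l.\<close>

record 'a ops =
  rels :: "(nat \<times> 'a list set) set"
  quants :: "(nat list \<times> 'a list set list set) set"

definition wf_ops :: "'a ops \<Rightarrow> bool" where
  "wf_ops q \<longleftrightarrow>
     (\<forall>(k, R) \<in> rels q. \<forall>as \<in> R. length as = k) \<and>
     (\<forall>(ks, Q) \<in> quants q. \<forall>Rs \<in> Q. length Rs = length ks \<and>
        (\<forall>i < length ks. \<forall>as \<in> Rs ! i. length as = ks ! i))"

definition upds :: "('v \<Rightarrow> 'a) \<Rightarrow> 'v list \<Rightarrow> 'a list \<Rightarrow> ('v \<Rightarrow> 'a)" where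
  "upds s xs as = (\<lambda>v. case map_of (zip xs as) v of None \<Rightarrow> s v | Some a \<Rightarrow> a)"

text \<open>Formulas of the equality-free infinitary logic L^-_{\<infinity>\<infinity>}(q), represented by
  their syntactic set of free variables F together with their meaning
  (the predicate on assignments s :: 'v \<Rightarrow> 'a that they define in \<Omega>, q).
  fml q F P: there is a formula with free variable set F whose truth set is P.\<close>
inductive fml :: "'a ops \<Rightarrow> 'v set \<Rightarrow> (('v \<Rightarrow> 'a) \<Rightarrow> bool) \<Rightarrow> bool" for q where
  atom: "(k, R) \<in> rels q \<Longrightarrow> length vs = k \<Longrightarrow>
         fml q (set vs) (\<lambda>s. map s vs \<in> R)"
| neg: "fml q F P \<Longrightarrow> fml q F (\<lambda>s. \<not> P s)"
| conj: "(\<forall>p \<in> S. fml q (fst p) (snd p)) \<Longrightarrow>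
         fml q (\<Union>(fst ` S)) (\<lambda>s. \<forall>p \<in> S. snd p s)"
| disj: "(\<forall>p \<in> S. fml q (fst p) (snd p)) \<Longrightarrow>
         fml q (\<Union>(fst ` S)) (\<lambda>s. \<exists>p \<in> S. snd p s)"
| ex: "fml q F P \<Longrightarrow>
       fml q (F - X) (\<lambda>s. \<exists>t. (\<forall>v. v \<notin> X \<longrightarrow> t v = s v) \<and> P t)"
| all: "fml q F P \<Longrightarrow>
       fml q (F - X) (\<lambda>s. \<forall>t. (\<forall>v. v \<notin> X \<longrightarrow> t v = s v) \<longrightarrow> P t)"
| gq: "(ks, Q) \<in> quants q \<Longrightarrow> length xs = length ks \<Longrightarrow> length phis = length ks \<Longrightarrow>
       (\<forall>i < length ks. distinct (xs ! i) \<and> length (xs ! i) = ks ! i \<and>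
           fml q (fst (phis ! i)) (snd (phis ! i))) \<Longrightarrow>
       fml q (\<Union>i < length ks. fst (phis ! i) - set (xs ! i))
         (\<lambda>s. map (\<lambda>i. {as. length as = ks ! i \<and> snd (phis ! i) (upds s (xs ! i) as)})
                  [0..<length ks] \<in> Q)"

definition sim_q :: "'a ops \<Rightarrow> 'v itself \<Rightarrow> 'a \<Rightarrow> 'a \<Rightarrow> bool" where
  "sim_q q _ a b \<longleftrightarrow>
     (\<forall>(F :: 'v set) P x s. fml q F P \<longrightarrow> (P (s(x := a)) \<longleftrightarrow> P (s(x := b))))"

end

theory Submission
  imports Defs
begin

text \<open>If some relation of q has positive arity, two renamings of a formula \<phi>(w, \<dots>) that send w
  to x resp. y and all other variables injectively away from {x, y} give the two-variable
  formula \<theta>(x, y) = \<forall>(others). \<phi>(x, \<dots>) \<leftrightarrow> \<phi>(y, \<dots>). It holds at (a, a), so the two-variable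
  condition transfers it to (b, a), which says \<phi>(b, c\<dots>) \<leftrightarrow> \<phi>(a, c\<dots>). If all relations are
  nullary, every formula has a constant truth value and there is nothing to prove.\<close>

lemma fml_cong: "fml q F P \<Longrightarrow> F = F' \<Longrightarrow> P = P' \<Longrightarrow> fml q F' P'"
  by simp

lemma map_of_zip_map_inj:
  assumes "inj \<rho>"
  shows "map_of (zip (map \<rho> xs) as) (\<rho> v) = map_of (zip xs as) v"
proof (induction xs arbitrary: as)
  case Nil then show ?case by simp
next
  case (Cons x xs)
  then show ?case using assms by (cases as) (auto dest: injD)
qed

lemma upds_map_inj:
  assumes "inj \<rho>"
  shows "upds s (map \<rho> xs) as \<circ> \<rho> = upds (s \<circ> \<rho>) xs as"
  unfolding upds_def comp_def by (simp add: map_of_zip_map_inj[OF assms])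

lemma inj_comp_extend_assignment:
  assumes "inj \<rho>" "\<forall>v. v \<notin> X \<longrightarrow> t v = s (\<rho> v)"
  obtains t' where "\<forall>v. v \<notin> \<rho> ` X \<longrightarrow> t' v = s v" "t' \<circ> \<rho> = t"
proof
  define t' where "t' = (\<lambda>u. if u \<in> range \<rho> then t (inv \<rho> u) else s u)"
  show "t' \<circ> \<rho> = t" using assms(1) by (auto simp: t'_def)
  show "\<forall>v. v \<notin> \<rho> ` X \<longrightarrow> t' v = s v" using assms by (auto simp: t'_def)
qed

lemma ex_assignment_rename:
  assumes "inj \<rho>"
  shows "(\<exists>t. (\<forall>v. v \<notin> \<rho> ` X \<longrightarrow> t v = s v) \<and> P (t \<circ> \<rho>)) \<longleftrightarrow>
    (\<exists>t. (\<forall>v. v \<notin> X \<longrightarrow> t v = (s \<circ> \<rho>) v) \<and> P t)"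
proof
  assume "\<exists>t. (\<forall>v. v \<notin> \<rho> ` X \<longrightarrow> t v = s v) \<and> P (t \<circ> \<rho>)"
  then obtain t where "\<forall>v. v \<notin> \<rho> ` X \<longrightarrow> t v = s v" "P (t \<circ> \<rho>)" by blast
  then show "\<exists>t. (\<forall>v. v \<notin> X \<longrightarrow> t v = (s \<circ> \<rho>) v) \<and> P t"
    using assms by (intro exI[of _ "t \<circ> \<rho>"]) (auto simp: inj_image_mem_iff)
next
  assume "\<exists>t. (\<forall>v. v \<notin> X \<longrightarrow> t v = (s \<circ> \<rho>) v) \<and> P t"
  then obtain t where t: "\<forall>v. v \<notin> X \<longrightarrow> t v = s (\<rho> v)" "P t" by auto
  obtain t' where "\<forall>v. v \<notin> \<rho> ` X \<longrightarrow> t' v = s v" "t' \<circ> \<rho> = t"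
    using inj_comp_extend_assignment[OF assms t(1)] .
  with t(2) show "\<exists>t. (\<forall>v. v \<notin> \<rho> ` X \<longrightarrow> t v = s v) \<and> P (t \<circ> \<rho>)" by blast
qed

lemma all_assignment_rename:
  assumes "inj \<rho>"
  shows "(\<forall>t. (\<forall>v. v \<notin> \<rho> ` X \<longrightarrow> t v = s v) \<longrightarrow> P (t \<circ> \<rho>)) \<longleftrightarrow>
    (\<forall>t. (\<forall>v. v \<notin> X \<longrightarrow> t v = (s \<circ> \<rho>) v) \<longrightarrow> P t)"
  using ex_assignment_rename[OF assms, of X s "\<lambda>t. \<not> P t"] by blast

lemma fml_rename:
  assumes "fml q F P" "inj \<rho>"
  shows "fml q (\<rho> ` F) (\<lambda>s. P (s \<circ> \<rho>))"
  using assms(1)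
proof (induction rule: fml.induct)
  case (atom k R vs)
  show ?case
    by (rule fml_cong[OF fml.atom[OF atom(1), of "map \<rho> vs"]]) (auto simp: atom(2) comp_def)
next
  case (neg F P)
  then show ?case using fml.neg by blast
next
  case (conj S)
  let ?S = "(\<lambda>p. (\<rho> ` fst p, \<lambda>s. snd p (s \<circ> \<rho>))) ` S"
  have "\<forall>p\<in>?S. fml q (fst p) (snd p)" using conj by (fastforce simp: comp_def)
  from fml.conj[OF this] show ?case
    by (rule fml_cong) (auto simp: comp_def)
next
  case (disj S)
  let ?S = "(\<lambda>p. (\<rho> ` fst p, \<lambda>s. snd p (s \<circ> \<rho>))) ` S"
  have "\<forall>p\<in>?S. fml q (fst p) (snd p)" using disj by (fastforce simp: comp_def)
  from fml.disj[OF this] show ?case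
    by (rule fml_cong) (auto simp: comp_def)
next
  case (ex F P X)
  from fml.ex[OF ex(2), of "\<rho> ` X"] show ?case
  proof (rule fml_cong)
    show "\<rho> ` F - \<rho> ` X = \<rho> ` (F - X)" using assms(2) by (simp add: image_set_diff)
  qed (rule ext, rule ex_assignment_rename[OF assms(2)])
next
  case (all F P X)
  from fml.all[OF all(2), of "\<rho> ` X"] show ?case
  proof (rule fml_cong)
    show "\<rho> ` F - \<rho> ` X = \<rho> ` (F - X)" using assms(2) by (simp add: image_set_diff)
  qed (rule ext, rule all_assignment_rename[OF assms(2)])
next
  case (gq ks Q xs phis)
  let ?xs = "map (map \<rho>) xs"
  let ?phis = "map (\<lambda>p. (\<rho> ` fst p, \<lambda>s. snd p (s \<circ> \<rho>))) phis"
  have "\<forall>i < length ks. distinct (?xs ! i) \<and> length (?xs ! i) = ks ! i \<and>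
           fml q (fst (?phis ! i)) (snd (?phis ! i))"
    using gq assms(2) by (auto simp: distinct_map inj_on_def comp_def)
  from fml.gq[OF gq(1) _ _ this] gq(2,3) show ?case
  proof (rule_tac fml_cong)
    show "(\<Union>i<length ks. fst (?phis ! i) - set (?xs ! i)) =
        \<rho> ` (\<Union>i<length ks. fst (phis ! i) - set (xs ! i))"
      using gq(2,3) assms(2) by (auto simp: image_UN image_set_diff)
    show "(\<lambda>s. map (\<lambda>i. {as. length as = ks ! i \<and> snd (?phis ! i) (upds s (?xs ! i) as)})
                  [0..<length ks] \<in> Q) =
      (\<lambda>s. map (\<lambda>i. {as. length as = ks ! i \<and> snd (phis ! i) (upds (s \<circ> \<rho>) (xs ! i) as)})
                  [0..<length ks] \<in> Q)"
      using gq(2,3) by (intro ext arg_cong[where f="\<lambda>l. l \<in> Q"] map_cong refl)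
          (simp add: upds_map_inj[OF assms(2)])
  qed auto
qed

lemma fml_conj2: "fml q F P \<Longrightarrow> fml q G Q \<Longrightarrow> fml q (F \<union> G) (\<lambda>s. P s \<and> Q s)"
  using fml.conj[of "{(F, P), (G, Q)}"] by (rule_tac fml_cong) auto

lemma fml_disj2: "fml q F P \<Longrightarrow> fml q G Q \<Longrightarrow> fml q (F \<union> G) (\<lambda>s. P s \<or> Q s)"
  using fml.disj[of "{(F, P), (G, Q)}"] by (rule_tac fml_cong) auto

lemma fml_iff:
  assumes "fml q F P" "fml q G Q"
  shows "fml q (F \<union> G) (\<lambda>s. P s \<longleftrightarrow> Q s)"
proof -
  have "fml q (F \<union> G) (\<lambda>s. P s \<and> Q s)" "fml q (F \<union> G) (\<lambda>s. \<not> P s \<and> \<not> Q s)"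
    using assms by (auto intro: fml_conj2 fml.neg)
  from fml_disj2[OF this] show ?thesis by (rule fml_cong) auto
qed

lemma fml_true:
  assumes "(k, R) \<in> rels q" "0 < k"
  shows "fml q {z} (\<lambda>s. True)"
proof -
  have "fml q {z} (\<lambda>s. map s (replicate k z) \<in> R)"
    using fml.atom[OF assms(1), of "replicate k z"] assms(2) by simp
  from fml_disj2[OF this fml.neg[OF this]] show ?thesis by (rule fml_cong) auto
qed

text \<open>Without a relation of positive arity there is no formula that has a given variable
  free without constraining it, so free variable sets could not be enlarged.\<close>
lemma fml_enlarge_free_vars:
  assumes "fml q F P" "F \<subseteq> V" "(k, R) \<in> rels q" "0 < k"
  shows "fml q V P"
proof -
  let ?S = "insert (F, P) ((\<lambda>z. ({z}, \<lambda>s. True)) ` V)"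
  have "\<forall>p \<in> ?S. fml q (fst p) (snd p)" using assms fml_true by auto
  from fml.conj[OF this] show ?thesis
    by (rule fml_cong) (use assms(2) in auto)
qed

lemma fml_forall_except:
  assumes "fml q F P" "(k, R) \<in> rels q" "0 < k"
  shows "fml q V (\<lambda>u. \<forall>t. (\<forall>v \<in> V. t v = u v) \<longrightarrow> P t)"
proof -
  from fml.all[OF assms(1), of "- V"] have "fml q (F \<inter> V) (\<lambda>u. \<forall>t. (\<forall>v \<in> V. t v = u v) \<longrightarrow> P t)"
    by (rule fml_cong) auto
  then show ?thesis using fml_enlarge_free_vars assms(2,3) by blast
qed

lemma fml_constant_if_nullary:
  assumes "fml q F P" "\<forall>(k, R) \<in> rels q. k = 0"
  shows "P s \<longleftrightarrow> P t"
  using assms(1)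
proof (induction arbitrary: s t rule: fml.induct)
  case (atom k R vs)
  then show ?case using assms(2) by auto
next
  case (conj S) then show ?case by (metis snd_conv)
next
  case (disj S) then show ?case by (metis snd_conv)
next
  case (gq ks Q xs phis)
  have "{as. length as = ks ! i \<and> snd (phis ! i) (upds s (xs ! i) as)} =
        {as. length as = ks ! i \<and> snd (phis ! i) (upds t (xs ! i) as)}" if "i < length ks" for i
    using gq.IH that by blast
  then show ?case by (metis (no_types, lifting) atLeastLessThan_iff map_eq_conv set_upt)
qed blast+

lemma inj_avoiding_two:
  assumes "infinite (UNIV :: 'v set)"
  obtains \<sigma> :: "'v \<Rightarrow> 'v" where "inj \<sigma>" "x \<notin> range \<sigma>" "y \<notin> range \<sigma>"
proof -
  have "infinite (UNIV - {x})" using assms by simp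
  obtain h1 :: "'v \<Rightarrow> 'v" where "bij_betw h1 UNIV (UNIV - {x})"
    using infinite_imp_bij_betw[OF assms] by blast
  moreover obtain h2 :: "'v \<Rightarrow> 'v" where "bij_betw h2 (UNIV - {x}) (UNIV - {x} - {y})"
    using infinite_imp_bij_betw[OF \<open>infinite (UNIV - {x})\<close>] by blast
  ultimately have "bij_betw (h2 \<circ> h1) UNIV (UNIV - {x} - {y})" by (rule bij_betw_trans)
  then show ?thesis using that by (auto simp: bij_betw_def)
qed

lemma sim_var_if_sim_two_vars:
  fixes q :: "'a ops" and P :: "('v \<Rightarrow> 'a) \<Rightarrow> bool"
  assumes "infinite (UNIV :: 'v set)"
    and "(k, R) \<in> rels q" "0 < k"
    and two_vars: "\<forall>(F :: 'v set) P x y c s. fml q F P \<longrightarrow> x \<noteq> y \<longrightarrow> F = {x, y} \<longrightarrow>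
        (P (s(x := a, y := c)) \<longleftrightarrow> P (s(x := b, y := c)))"
    and "fml q F P"
  shows "P (s(w := a)) \<longleftrightarrow> P (s(w := b))"
proof -
  obtain x y :: 'v where "x \<noteq> y"
    using assms(1) by (metis finite.emptyI finite_insert insertCI subsetI finite_subset)
  obtain \<sigma> :: "'v \<Rightarrow> 'v" where \<sigma>: "inj \<sigma>" "x \<notin> range \<sigma>" "y \<notin> range \<sigma>"
    using inj_avoiding_two[OF assms(1)] .
  define \<rho>x where "\<rho>x = \<sigma>(w := x)"
  define \<rho>y where "\<rho>y = \<sigma>(w := y)"
  have "inj \<rho>x" "inj \<rho>y" unfolding \<rho>x_def \<rho>y_def using \<sigma> by (auto intro!: inj_on_fun_updI)
  define \<theta> where "\<theta> = (\<lambda>u. \<forall>t. (\<forall>v \<in> {x, y}. t v = u v) \<longrightarrow> (P (t \<circ> \<rho>x) \<longleftrightarrow> P (t \<circ> \<rho>y)))"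
  have "fml q {x, y} \<theta>"
    unfolding \<theta>_def using fml_iff[OF fml_rename fml_rename] assms(2,3,5) \<open>inj \<rho>x\<close> \<open>inj \<rho>y\<close>
    by (rule_tac fml_forall_except) blast+
  moreover have "\<theta> (s(x := a, y := a))"
  proof -
    have "t \<circ> \<rho>x = t \<circ> \<rho>y" if "t x = t y" for t :: "'v \<Rightarrow> 'a"
      using that by (auto simp: \<rho>x_def \<rho>y_def fun_eq_iff)
    then show ?thesis unfolding \<theta>_def by simp
  qed
  ultimately have \<theta>_ba: "\<theta> (s(x := b, y := a))"
    using two_vars \<open>x \<noteq> y\<close> by blast
  define t where "t = (\<lambda>v. if v = x then b else if v = y then a else s (inv \<sigma> v))"
  have "t \<circ> \<rho>x = s(w := b)" "t \<circ> \<rho>y = s(w := a)"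
    unfolding t_def \<rho>x_def \<rho>y_def using \<sigma> \<open>x \<noteq> y\<close> by (auto simp: fun_eq_iff)
  moreover have "P (t \<circ> \<rho>x) \<longleftrightarrow> P (t \<circ> \<rho>y)"
    using \<theta>_ba \<open>x \<noteq> y\<close> unfolding \<theta>_def t_def by auto
  ultimately show ?thesis by simp
qed

theorem lemma11:
  fixes q :: "'a ops" and a b :: 'a
  assumes "wf_ops q"
    and "infinite (UNIV :: 'v set)"
  shows "sim_q q TYPE('v) a b \<longleftrightarrow>
    (\<forall>(F :: 'v set) P x y c s. fml q F P \<longrightarrow> x \<noteq> y \<longrightarrow> F = {x, y} \<longrightarrow>
        (P (s(x := a, y := c)) \<longleftrightarrow> P (s(x := b, y := c))))"
proof
  assume "sim_q q TYPE('v) a b"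
  then show "\<forall>(F :: 'v set) P x y c s. fml q F P \<longrightarrow> x \<noteq> y \<longrightarrow> F = {x, y} \<longrightarrow>
        (P (s(x := a, y := c)) \<longleftrightarrow> P (s(x := b, y := c)))"
    unfolding sim_q_def by (metis fun_upd_twist)
next
  assume two_vars: "\<forall>(F :: 'v set) P x y c s. fml q F P \<longrightarrow> x \<noteq> y \<longrightarrow> F = {x, y} \<longrightarrow>
        (P (s(x := a, y := c)) \<longleftrightarrow> P (s(x := b, y := c)))"
  show "sim_q q TYPE('v) a b"
    unfolding sim_q_def
  proof (intro allI impI)
    fix F :: "'v set" and P w s
    assume "fml q F P"
    show "P (s(w := a)) \<longleftrightarrow> P (s(w := b))"
    proof (cases "\<forall>(k, R) \<in> rels q. k = 0")
      case True
      with \<open>fml q F P\<close> show ?thesis by (rule fml_constant_if_nullary)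
    next
      case False
      then obtain k R where "(k, R) \<in> rels q" "0 < k" by auto
      from sim_var_if_sim_two_vars[OF assms(2) this two_vars \<open>fml q F P\<close>] show ?thesis .
    qed
  qed
qed

end
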